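(* For every $n\geq 3$, the cycle $C_n$ is a strong 2-cop-win graph and $\lim_{m\to\infty}\mathrm{capt}_2(C_n,m)=\lfloor (n-1)/2\rfloor$.
   Context: All graphs are finite, simple, connected and reflexive (a player may stay in place). The game of $k$ cops and $m$ robbers on $G$: in round 0 the cops first choose starting vertices, then the robbers choose theirs. In each round $i\geq 1$, all $k$ cops move (each to an adjacent vertex or staying), then all $m$ robbers move likewise. Several players may occupy the same vertex. Whenever a cop and some robbers occupy the same vertex, those robbers are captured and take no further part in the game. Both sides have full information. The cops win if all robbers are captured after finitely many rounds. $G$ is $k$-cop-win if $k$ cops can always win against one robber. For a $k$-cop-win graph $G$, $\mathrm{capt}_k(G,m)$ is the index of the round in which the last robber is captured when $k$ cops play to minimize this index and $m$ robbers play to maximize it. $G$ is strong $k$-cop-win if $\lim_{m\to\infty}\mathrm{capt}_k(G,m)$ exists (and is finite). *)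

theory Defs
  imports Complex_Main
begin

text \<open>A graph is given by a vertex set V and an (irreflexive, symmetric) edge
relation E; the game is played reflexively: a player may stay or move along an edge.
k cops occupy positions c i (i < k); m robbers have status r j (j < m), where
None means captured and Some v means active at vertex v.\<close>

definition step_ok :: "'v set \<Rightarrow> ('v \<Rightarrow> 'v \<Rightarrow> bool) \<Rightarrow> 'v \<Rightarrow> 'v \<Rightarrow> bool" where
  "step_ok V E v w \<longleftrightarrow> w \<in> V \<and> (w = v \<or> E v w)"

definition cop_move :: "'v set \<Rightarrow> ('v \<Rightarrow> 'v \<Rightarrow> bool) \<Rightarrow> nat \<Rightarrow> (nat \<Rightarrow> 'v) \<Rightarrow> (nat \<Rightarrow> 'v) \<Rightarrow> bool" where
  "cop_move V E k c c' \<longleftrightarrow> (\<forall>i<k. step_ok V E (c i) (c' i))"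

definition robber_move :: "'v set \<Rightarrow> ('v \<Rightarrow> 'v \<Rightarrow> bool) \<Rightarrow> nat \<Rightarrow> (nat \<Rightarrow> 'v option) \<Rightarrow> (nat \<Rightarrow> 'v option) \<Rightarrow> bool" where
  "robber_move V E m r r' \<longleftrightarrow> (\<forall>j<m. case r j of
       None \<Rightarrow> r' j = None
     | Some v \<Rightarrow> (\<exists>w. r' j = Some w \<and> step_ok V E v w))"

definition capture :: "nat \<Rightarrow> (nat \<Rightarrow> 'v) \<Rightarrow> (nat \<Rightarrow> 'v option) \<Rightarrow> (nat \<Rightarrow> 'v option)" where
  "capture k c r = (\<lambda>j. case r j of None \<Rightarrow> None
                      | Some v \<Rightarrow> (if \<exists>i<k. c i = v then None else Some v))"

definition all_captured :: "nat \<Rightarrow> (nat \<Rightarrow> 'v option) \<Rightarrow> bool" where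
  "all_captured m r \<longleftrightarrow> (\<forall>j<m. r j = None)"

text \<open>win_in V E k m t c r: from the state (c, r) at the end of a round (captures
already applied), the cops can guarantee that all robbers are captured within t
further rounds.\<close>
fun win_in :: "'v set \<Rightarrow> ('v \<Rightarrow> 'v \<Rightarrow> bool) \<Rightarrow> nat \<Rightarrow> nat \<Rightarrow> nat \<Rightarrow> (nat \<Rightarrow> 'v) \<Rightarrow> (nat \<Rightarrow> 'v option) \<Rightarrow> bool" where
  "win_in V E k m 0 c r = all_captured m r"
| "win_in V E k m (Suc t) c r =
     (all_captured m r \<or>
      (\<exists>c'. cop_move V E k c c' \<and>
        (\<forall>r'. robber_move V E m (capture k c' r) r' \<longrightarrow>
              win_in V E k m t c' (capture k c' r'))))"

definition capt_within :: "'v set \<Rightarrow> ('v \<Rightarrow> 'v \<Rightarrow> bool) \<Rightarrow> nat \<Rightarrow> nat \<Rightarrow> nat \<Rightarrow> bool" where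
  "capt_within V E k m t \<longleftrightarrow>
     (\<exists>c0. (\<forall>i<k. c0 i \<in> V) \<and>
        (\<forall>r0. (\<forall>j<m. r0 j \<in> V) \<longrightarrow> win_in V E k m t c0 (capture k c0 (\<lambda>j. Some (r0 j)))))"

definition cop_win :: "'v set \<Rightarrow> ('v \<Rightarrow> 'v \<Rightarrow> bool) \<Rightarrow> nat \<Rightarrow> bool" where
  "cop_win V E k \<longleftrightarrow> (\<exists>t. capt_within V E k 1 t)"

definition capt :: "'v set \<Rightarrow> ('v \<Rightarrow> 'v \<Rightarrow> bool) \<Rightarrow> nat \<Rightarrow> nat \<Rightarrow> nat" where
  "capt V E k m = (LEAST t. capt_within V E k m t)"

definition strong_cop_win :: "'v set \<Rightarrow> ('v \<Rightarrow> 'v \<Rightarrow> bool) \<Rightarrow> nat \<Rightarrow> bool" where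
  "strong_cop_win V E k \<longleftrightarrow> cop_win V E k \<and> convergent (\<lambda>m. real (capt V E k m))"

definition cycle_V :: "nat \<Rightarrow> nat set" where
  "cycle_V n = {0..<n}"

definition cycle_E :: "nat \<Rightarrow> nat \<Rightarrow> nat \<Rightarrow> bool" where
  "cycle_E n i j \<longleftrightarrow> i < n \<and> j < n \<and> (j = (i + 1) mod n \<or> i = (j + 1) mod n)"

end

theory Submission
  imports Defs
begin

text \<open>Lower bound: let m \<ge> n robbers occupy every vertex and never move. A round
of two cops captures the robbers on at most two vertices, so at least n - 2
vertices survive the start and two more are cleared per round, which takes
(n - 1) div 2 rounds. Upper bound: the cops start just outside the two ends
of an arc containing all robbers and step inwards every round; no robber can
leave the arc, which loses a vertex at each end per round.\<close>

definition active_positions :: "nat \<Rightarrow> (nat \<Rightarrow> 'v option) \<Rightarrow> 'v set" where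
  "active_positions m r = {v. \<exists>j<m. r j = Some v}"

lemma all_captured_iff_active_positions_empty:
  "all_captured m r \<longleftrightarrow> active_positions m r = {}"
  by (auto simp: all_captured_def active_positions_def) (meson not_None_eq)

lemma active_positions_Some: "active_positions m (\<lambda>j. Some (r j)) = r ` {..<m}"
  by (auto simp: active_positions_def)

lemma capture_eq_Some:
  "capture k c r j = Some v \<longleftrightarrow> r j = Some v \<and> v \<notin> c ` {..<k}"
  by (auto simp: capture_def split: option.splits)

lemma capture_capture [simp]: "capture k c (capture k c r) = capture k c r"
  by (rule ext) (auto simp: capture_def split: option.splits)

lemma active_positions_capture:
  "active_positions m (capture k c r) = active_positions m r - c ` {..<k}"
  by (auto simp: active_positions_def capture_eq_Some)

lemma robber_move_stay:
  assumes "active_positions m r \<subseteq> V"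
  shows "robber_move V E m r r"
  using assms
  by (fastforce simp: robber_move_def active_positions_def step_ok_def split: option.splits)

lemma active_positions_robber_move:
  assumes "robber_move V E m r r'"
  shows "active_positions m r' \<subseteq> {w. \<exists>v \<in> active_positions m r. step_ok V E v w}"
proof
  fix w
  assume "w \<in> active_positions m r'"
  then obtain j where "j < m" "r' j = Some w"
    by (auto simp: active_positions_def)
  with assms show "w \<in> {w. \<exists>v \<in> active_positions m r. step_ok V E v w}"
    by (cases "r j") (fastforce simp: robber_move_def active_positions_def)+
qed

lemma card_le_card_Diff_image_lessThan: "card A \<le> card (A - f ` {..<k}) + k"
  using diff_card_le_card_Diff[of "f ` {..<k}" A] card_image_le[of "{..<k}" f] by simp

lemma win_in_if_all_captured: "all_captured m r \<Longrightarrow> win_in V E k m t c r"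
  by (cases t) simp_all

lemma win_in_card_active_positions_le:
  assumes "win_in V E k m t c r" and "active_positions m r \<subseteq> V"
  shows "card (active_positions m r) \<le> k * t"
  using assms
proof (induction t arbitrary: c r)
  case 0
  then show ?case
    by (simp add: all_captured_iff_active_positions_empty)
next
  case (Suc t)
  show ?case
  proof (cases "all_captured m r")
    case True
    then show ?thesis
      by (simp add: all_captured_iff_active_positions_empty)
  next
    case False
    with Suc.prems(1) obtain c' where
      win: "\<And>r'. robber_move V E m (capture k c' r) r' \<Longrightarrow> win_in V E k m t c' (capture k c' r')"
      by auto
    have robbers_stay: "robber_move V E m (capture k c' r) (capture k c' r)"
      using Suc.prems(2) by (intro robber_move_stay) (auto simp: active_positions_capture)
    have "card (active_positions m r - c' ` {..<k}) \<le> k * t"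
      using Suc.IH[OF win[OF robbers_stay]] Suc.prems(2)
      by (auto simp: active_positions_capture)
    then show ?thesis
      using card_le_card_Diff_image_lessThan[of "active_positions m r" c' k] by simp
  qed
qed

lemma ex_robber_placement_covering:
  assumes "finite V" "V \<noteq> {}" "card V \<le> m"
  obtains r0 :: "nat \<Rightarrow> 'v" where "\<forall>j<m. r0 j \<in> V" "V \<subseteq> r0 ` {..<m}"
proof -
  obtain v0 where "v0 \<in> V"
    using assms(2) by blast
  obtain h where h: "bij_betw h {0..<card V} V"
    using ex_bij_betw_nat_finite[OF assms(1)] by blast
  define r0 where "r0 j = (if j < card V then h j else v0)" for j
  have "\<forall>j<m. r0 j \<in> V"
    using h \<open>v0 \<in> V\<close> by (auto simp: r0_def bij_betw_def)
  moreover have "V \<subseteq> r0 ` {..<m}"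
  proof
    fix v
    assume "v \<in> V"
    then obtain j where "j < card V" "h j = v"
      using h by (force simp: bij_betw_def)
    with assms(3) show "v \<in> r0 ` {..<m}"
      by (force simp: r0_def)
  qed
  ultimately show ?thesis
    using that by blast
qed

lemma capt_within_card_le:
  assumes "capt_within V E k m t" and "finite V" and "card V \<le> m"
  shows "card V \<le> k * Suc t"
proof (cases "V = {}")
  case False
  obtain c0 where win:
    "\<And>r0. \<forall>j<m. r0 j \<in> V \<Longrightarrow> win_in V E k m t c0 (capture k c0 (\<lambda>j. Some (r0 j)))"
    using assms(1) by (auto simp: capt_within_def)
  obtain r0 where r0: "\<forall>j<m. r0 j \<in> V" "V \<subseteq> r0 ` {..<m}"
    using ex_robber_placement_covering[OF assms(2) False assms(3)] by blast
  then have active: "active_positions m (capture k c0 (\<lambda>j. Some (r0 j))) = V - c0 ` {..<k}"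
    by (auto simp: active_positions_capture active_positions_Some)
  have "card (V - c0 ` {..<k}) \<le> k * t"
    using win_in_card_active_positions_le[OF win[OF r0(1)]] by (simp add: active)
  then show ?thesis
    using card_le_card_Diff_image_lessThan[of V c0 k] by simp
qed simp

lemma cycle_step_ok_interior:
  assumes "step_ok (cycle_V n) (cycle_E n) v w" and "0 < v" and "v + 1 < n"
  shows "v - 1 \<le> w \<and> w \<le> v + 1"
proof -
  have "w < n" "w = v \<or> w = (v + 1) mod n \<or> v = (w + 1) mod n"
    using assms(1) by (auto simp: step_ok_def cycle_V_def cycle_E_def)
  moreover have "(w + 1) mod n = (if w + 1 = n then 0 else w + 1)" if "w < n"
    using that by auto
  ultimately show ?thesis
    using assms(2,3) by (auto split: if_splits)
qed

lemma cycle_sweep_wins: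
  assumes "0 < a" and "b < n" and "b < a + 2 * t"
    and "c 0 = a - 1" and "c 1 = (b + 1) mod n"
    and "active_positions m r \<subseteq> {a..b}"
  shows "win_in (cycle_V n) (cycle_E n) 2 m t c r"
  using assms
proof (induction t arbitrary: a b c r)
  case 0
  then show ?case
    by (simp add: all_captured_iff_active_positions_empty)
next
  case (Suc t)
  show ?case
  proof (cases "a \<le> b")
    case False
    with Suc.prems(6) show ?thesis
      by (intro win_in_if_all_captured) (simp add: all_captured_iff_active_positions_empty)
  next
    case True
    define c' :: "nat \<Rightarrow> nat" where "c' i = (if i = 0 then a else b)" for i
    have cops_at_ends: "c' ` {..<2} = {a, b}"
      by (auto simp: c'_def lessThan_Suc numeral_2_eq_2)
    have "cop_move (cycle_V n) (cycle_E n) 2 c c'"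
      using Suc.prems(1-5) True
      by (auto simp: cop_move_def step_ok_def cycle_V_def cycle_E_def c'_def less_2_cases_iff)
    moreover have "win_in (cycle_V n) (cycle_E n) 2 m t c' (capture 2 c' r')"
      if robbers: "robber_move (cycle_V n) (cycle_E n) m (capture 2 c' r) r'" for r'
    proof (rule Suc.IH)
      have "active_positions m (capture 2 c' r) \<subseteq> {a<..<b}"
        using Suc.prems(6) by (auto simp: active_positions_capture cops_at_ends)
      then have "active_positions m r' \<subseteq> {a..b}"
        using active_positions_robber_move[OF robbers] Suc.prems(1,2)
          cycle_step_ok_interior
        by fastforce
      then show "active_positions m (capture 2 c' r') \<subseteq> {a + 1..b - 1}"
        by (fastforce simp: active_positions_capture cops_at_ends)
    qed (use Suc.prems True in \<open>auto simp: c'_def\<close>)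
    ultimately show ?thesis
      by auto
  qed
qed

lemma cycle_capt_within:
  assumes "2 \<le> n"
  shows "capt_within (cycle_V n) (cycle_E n) 2 m ((n - 1) div 2)"
proof -
  define c0 :: "nat \<Rightarrow> nat" where "c0 i = (if i = 0 then 1 else 0)" for i
  have "win_in (cycle_V n) (cycle_E n) 2 m ((n - 1) div 2) c0 (capture 2 c0 (\<lambda>j. Some (r0 j)))"
    if "\<forall>j<m. r0 j \<in> cycle_V n" for r0
  proof (rule cycle_sweep_wins[where a = 2 and b = "n - 1"])
    have "c0 ` {..<2} = {1, 0}"
      by (auto simp: c0_def lessThan_Suc numeral_2_eq_2)
    then show "active_positions m (capture 2 c0 (\<lambda>j. Some (r0 j))) \<subseteq> {2..n - 1}"
      using that by (force simp: active_positions_capture active_positions_Some cycle_V_def)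
  qed (use assms in \<open>auto simp: c0_def\<close>)
  moreover have "\<forall>i<2. c0 i \<in> cycle_V n"
    using assms by (simp add: c0_def cycle_V_def)
  ultimately show ?thesis
    unfolding capt_within_def by blast
qed

lemma cycle_capt:
  assumes "2 \<le> n" and "n \<le> m"
  shows "capt (cycle_V n) (cycle_E n) 2 m = (n - 1) div 2"
  unfolding capt_def
proof (rule Least_equality)
  show "capt_within (cycle_V n) (cycle_E n) 2 m ((n - 1) div 2)"
    using cycle_capt_within[OF assms(1)] .
next
  fix t
  assume "capt_within (cycle_V n) (cycle_E n) 2 m t"
  from capt_within_card_le[OF this] have "n \<le> 2 * Suc t"
    using assms(2) by (simp add: cycle_V_def)
  then show "(n - 1) div 2 \<le> t"
    by simp
qed

theorem mainTheorem11:
  fixes n :: nat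
  assumes "n \<ge> 3"
  shows "strong_cop_win (cycle_V n) (cycle_E n) 2 \<and>
         (\<lambda>m. real (capt (cycle_V n) (cycle_E n) 2 m)) \<longlonglongrightarrow> real ((n - 1) div 2)"
proof -
  have "(\<lambda>m. real (capt (cycle_V n) (cycle_E n) 2 (m + n))) \<longlonglongrightarrow> real ((n - 1) div 2)"
    using assms by (simp add: cycle_capt)
  then have "(\<lambda>m. real (capt (cycle_V n) (cycle_E n) 2 m)) \<longlonglongrightarrow> real ((n - 1) div 2)"
    by (rule LIMSEQ_offset)
  moreover have "cop_win (cycle_V n) (cycle_E n) 2"
    unfolding cop_win_def using cycle_capt_within[of n 1] assms by auto
  ultimately show ?thesis
    by (auto simp: strong_cop_win_def convergent_def)
qed

end
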